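(* Let $n,k$ be positive integers with $n\ge k$. The integer $|\mathrm{ls}(n,k)|=|\mathrm{js}_n^k(1)|$ is the number of ordered pairs $(\sigma,\tau)$, where $\sigma$ is a permutation of $[n]_0=\{0,1,\dots,n\}$ with $k$ cycles and $\tau$ is a permutation of $[n]=\{1,\dots,n\}$ with $k$ cycles, such that $1\in\mathrm{Orb}_\sigma(0)$ and $\min\sigma=\min\tau$.
   Context: $\mathrm{js}_n^k(z)$ is defined by $\mathrm{js}_0^0(z)=1$, $\mathrm{js}_n^k(z)=0$ if $k\notin\{1,\dots,n\}$ (for $(n,k)\ne(0,0)$), and $\mathrm{js}_n^k(z)=\mathrm{js}_{n-1}^{k-1}(z)-(n-1)(n-1+z)\mathrm{js}_{n-1}^k(z)$ for $n,k\ge1$. The Legendre-Stirling numbers of the first kind are $\mathrm{ls}(n,k)=\mathrm{js}_n^k(1)$. For a permutation $\sigma$ and $j$ in its domain, $\mathrm{Orb}_\sigma(j)=\{\sigma^\ell(j):\ell\ge1\}$, and $\min(\sigma)=\{j\in[n]:j=\min(\mathrm{Orb}_\sigma(j)\cap[n])\}$ is the set of cyclic minima. *)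

theory Defs
  imports "HOL-Combinatorics.Permutations"
begin

fun js :: "int \<Rightarrow> nat \<Rightarrow> nat \<Rightarrow> int" where
  "js z 0 k = (if k = 0 then 1 else 0)"
| "js z (Suc n) k =
     (if k < 1 \<or> k > Suc n then 0
      else js z n (k - 1) - int n * (int n + z) * js z n k)"

definition ls :: "nat \<Rightarrow> nat \<Rightarrow> int" where
  "ls n k = js 1 n k"

definition Orb :: "(nat \<Rightarrow> nat) \<Rightarrow> nat \<Rightarrow> nat set" where
  "Orb \<sigma> j = {(\<sigma> ^^ l) j | l. l \<ge> 1}"

definition num_cycles :: "(nat \<Rightarrow> nat) \<Rightarrow> nat set \<Rightarrow> nat" where
  "num_cycles \<sigma> S = card ((\<lambda>j. Orb \<sigma> j) ` S)"

definition cyc_min :: "(nat \<Rightarrow> nat) \<Rightarrow> nat \<Rightarrow> nat set" where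
  "cyc_min \<sigma> n = {j \<in> {1..n}. j = Min (Orb \<sigma> j \<inter> {1..n})}"

end

theory Submission
  imports Defs "HOL-Combinatorics.Orbits"
begin

(*
  Both kinds of permutations are sorted by their set M of cyclic minima, which has one
  element per cycle. Removing the largest letter n from its cycle (composing with the
  transposition of n and its image) keeps every other cyclic minimum, and n itself is a cyclic
  minimum exactly when it is a fixed point, provided 1 lies on the cycle of 0. Reinserting n
  after any of the other letters therefore shows that M is the set of cyclic minima of
  prod_{j in [n]-M} (j - 1) permutations of [n], and (when 1 is in M) of prod_{j in [n]-M} j
  permutations of [n]_0 with 1 in the orbit of 0. The pairs are thus counted by
  sum_{|M| = k} prod_{j in [n]-M} j (j - 1), which satisfies the recursion of |js_n^k(1)|.
*)

lemma orbit_transpose_comp_remove: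
  assumes f: "inj f" and x: "x \<noteq> a"
  shows "orbit (transpose a (f a) \<circ> f) x = orbit f x - {a}"
proof -
  define g where "g = transpose a (f a) \<circ> f"
  have g: "g z = (if f z = a then f a else f z)" if "z \<noteq> a" for z
    using f that by (auto simp: g_def transpose_def inj_eq)
  have g_closed: "g z \<in> orbit f x \<and> g z \<noteq> a" if "z = x \<or> z \<in> orbit f x" "z \<noteq> a" for z
  proof -
    have fz: "f z \<in> orbit f x" using that(1) by (auto intro: orbit.intros)
    show ?thesis
    proof (cases "f z = a")
      case True
      then have "f a \<noteq> a" using that(2) f by (metis injD)
      with True fz show ?thesis using g[OF that(2)] by (auto intro: orbit.step)
    qed (use fz g[OF that(2)] in auto)
  qed
  have "y \<in> orbit f x \<and> y \<noteq> a" if "y \<in> orbit g x" for y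
    using that by induction (use g_closed x in auto)
  moreover have "(y \<noteq> a \<longrightarrow> y \<in> orbit g x) \<and> (y = a \<longrightarrow> f a \<in> orbit g x)"
    if "y \<in> orbit f x" for y
    using that
  proof induction
    case base
    show ?case using orbit.base[of g x] g[OF x] by (auto split: if_splits)
  next
    case (step y)
    show ?case
    proof (cases "y = a")
      case False
      then have "g y \<in> orbit g x" using step.IH by (auto intro: orbit.step)
      then show ?thesis using g[OF False] by (auto split: if_splits)
    qed (use step.IH in auto)
  qed
  ultimately show ?thesis unfolding g_def by blast
qed

lemma Orb_eq_orbit: "Orb f j = orbit f j"
  unfolding Orb_def orbit_altdef by (auto simp: Suc_le_eq)

lemma cyc_min_orbit: "cyc_min f n = {j \<in> {1..n}. j = Min (orbit f j \<inter> {1..n})}"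
  unfolding cyc_min_def Orb_eq_orbit ..

lemma cyc_min_subset: "cyc_min f n \<subseteq> {1..n}"
  unfolding cyc_min_def by auto

lemma one_in_cyc_min:
  assumes "permutation f" "1 \<le> n"
  shows "1 \<in> cyc_min f n"
proof -
  have "1 \<in> orbit f 1 \<inter> {1..n}" using permutation_self_in_orbit[OF assms(1)] assms(2) by simp
  then have "Min (orbit f 1 \<inter> {1..n}) = 1" by (intro Min_eqI) auto
  then show ?thesis using assms(2) unfolding cyc_min_orbit by simp
qed

text \<open>Sending each cycle to its least element in \<open>{1..n}\<close> is a bijection onto the cyclic minima.\<close>
lemma num_cycles_eq_card_cyc_min:
  assumes f: "f permutes A" "finite A" and A: "{1..n} \<subseteq> A"
    and meets: "\<And>x. x \<in> A \<Longrightarrow> orbit f x \<inter> {1..n} \<noteq> {}"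
  shows "num_cycles f A = card (cyc_min f n)"
proof -
  have cyclic: "cyclic_on f (orbit f x)" for x using cyclic_on_orbit[OF f] .
  have "orbit f ` A = orbit f ` cyc_min f n"
  proof (intro set_eqI iffI)
    fix X assume "X \<in> orbit f ` A"
    then obtain x where x: "x \<in> A" "X = orbit f x" by auto
    let ?m = "Min (orbit f x \<inter> {1..n})"
    have m: "?m \<in> orbit f x \<inter> {1..n}" using meets[OF x(1)] by (intro Min_in) auto
    then have "orbit f ?m = orbit f x" using orbit_cyclic_eq3[OF cyclic] by blast
    with m x show "X \<in> orbit f ` cyc_min f n" unfolding cyc_min_orbit by auto
  qed (use cyc_min_subset A in blast)
  moreover have "inj_on (orbit f) (cyc_min f n)"
    by (rule inj_onI) (auto simp: cyc_min_orbit)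
  ultimately show ?thesis unfolding num_cycles_def Orb_eq_orbit by (metis card_image)
qed

lemma num_cycles_permutes_orbit:
  assumes \<sigma>: "\<sigma> permutes {0..n}" and orbit: "1 \<in> orbit \<sigma> 0" and n: "1 \<le> n"
  shows "num_cycles \<sigma> {0..n} = card (cyc_min \<sigma> n)"
proof (rule num_cycles_eq_card_cyc_min[OF \<sigma>])
  fix x assume x: "x \<in> {0..n}"
  show "orbit \<sigma> x \<inter> {1..n} \<noteq> {}"
  proof (cases "x = 0")
    case True
    then show ?thesis using orbit n by auto
  next
    case False
    then have "x \<in> orbit \<sigma> x \<inter> {1..n}"
      using x permutation_self_in_orbit[OF permutes_imp_permutation[OF _ \<sigma>]] by simp
    then show ?thesis by blast
  qed
qed auto

lemma num_cycles_permutes: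
  assumes \<tau>: "\<tau> permutes {1..n}"
  shows "num_cycles \<tau> {1..n} = card (cyc_min \<tau> n)"
proof (rule num_cycles_eq_card_cyc_min[OF \<tau>])
  fix x assume "x \<in> {1..n}"
  then have "x \<in> orbit \<tau> x \<inter> {1..n}"
    using permutation_self_in_orbit[OF permutes_imp_permutation[OF _ \<tau>]] by simp
  then show "orbit \<tau> x \<inter> {1..n} \<noteq> {}" by blast
qed auto

lemma cyc_min_remove_below:
  fixes n :: nat
  assumes f: "permutation f" and j: "j \<in> {1..<n}"
  shows "j \<in> cyc_min (transpose n (f n) \<circ> f) (n - 1) \<longleftrightarrow> j \<in> cyc_min f n"
proof -
  let ?X = "orbit f j \<inter> {1..n}"
  have "inj f" using permutation_bijective[OF f] by (rule bij_is_inj)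
  then have "orbit (transpose n (f n) \<circ> f) j \<inter> {1..n - 1} = ?X - {n}"
    using orbit_transpose_comp_remove[of f j n] j by (simp add: set_eq_iff) linarith
  moreover have "Min (?X - {n}) = Min ?X"
  proof (rule Min_eqI)
    have j_in: "j \<in> ?X" using permutation_self_in_orbit[OF f, of j] j by auto
    then have "Min ?X \<le> j" by (intro Min_le) auto
    moreover have "Min ?X \<in> ?X" using j_in by (intro Min_in) auto
    ultimately show "Min ?X \<in> ?X - {n}" using j by auto
  qed auto
  moreover have "j \<in> {1..n}" "j \<in> {1..n - 1}" using j by auto
  ultimately show ?thesis unfolding cyc_min_orbit by simp
qed

text \<open>Without the hypothesis on \<open>0\<close>, \<open>n\<close> would be the cyclic minimum of a cycle \<open>(n 0)\<close>.\<close>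
lemma top_in_cyc_min_iff:
  fixes n :: nat
  assumes f: "f permutes A" and A: "A \<subseteq> {0..n}"
    and zero: "0 \<in> A \<Longrightarrow> 1 \<in> orbit f 0 \<and> 2 \<le> n" and n: "1 \<le> n"
  shows "n \<in> cyc_min f n \<longleftrightarrow> f n = n"
proof
  assume "f n = n"
  then have "orbit f n = {n}" by (simp add: orbit_eq_singleton_iff)
  then show "n \<in> cyc_min f n" using n unfolding cyc_min_orbit by simp
next
  assume n_min: "n \<in> cyc_min f n"
  show "f n = n"
  proof (rule ccontr)
    assume "f n \<noteq> n"
    then have "f n \<in> A" using f permutes_not_in permutes_in_image by metis
    have fn: "f n \<in> orbit f n" by (rule orbit.base)
    obtain m where m: "m \<in> orbit f n" "1 \<le> m" "m < n"
    proof (cases "f n = 0")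
      case True
      with \<open>f n \<in> A\<close> have "1 \<in> orbit f 0" "2 \<le> n" using zero by simp_all
      then have "1 \<in> orbit f n" using orbit_trans fn True by metis
      then show ?thesis using that \<open>2 \<le> n\<close> by simp
    next
      case False
      then show ?thesis using that[OF fn] subsetD[OF A \<open>f n \<in> A\<close>] \<open>f n \<noteq> n\<close> by simp
    qed
    then have "Min (orbit f n \<inter> {1..n}) \<le> m" by (intro Min_le) auto
    moreover have "n = Min (orbit f n \<inter> {1..n})" using n_min unfolding cyc_min_orbit by blast
    ultimately show False using m(3) by linarith
  qed
qed

lemma cyc_min_remove:
  fixes n :: nat
  assumes f: "f permutes A" and A: "A \<subseteq> {0..n}"
    and zero: "0 \<in> A \<Longrightarrow> 1 \<in> orbit f 0 \<and> 2 \<le> n" and n: "1 \<le> n"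
  shows "cyc_min f n = cyc_min (transpose n (f n) \<circ> f) (n - 1) \<union> (if f n = n then {n} else {})"
proof (rule set_eqI)
  fix j
  let ?g = "transpose n (f n) \<circ> f"
  have perm: "permutation f" using permutes_imp_permutation[OF finite_subset[OF A] f] by simp
  have g_below: "j \<notin> cyc_min ?g (n - 1)" if "j \<notin> {1..<n}"
    using that cyc_min_subset[of ?g "n - 1"] n by fastforce
  consider "j = n" | "j \<in> {1..<n}" | "j \<notin> {1..n}"
    by (metis atLeastAtMost_iff atLeastLessThan_iff nat_less_le)
  then show "j \<in> cyc_min f n \<longleftrightarrow> j \<in> cyc_min ?g (n - 1) \<union> (if f n = n then {n} else {})"
  proof cases
    case 1
    then show ?thesis using top_in_cyc_min_iff[OF f A zero n] g_below by simp
  next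
    case 2
    then show ?thesis using cyc_min_remove_below[OF perm] by simp
  next
    case 3
    then show ?thesis using g_below cyc_min_subset[of f n] n by auto
  qed
qed

lemma card_permutes_insert_filter:
  assumes B: "finite B" "a \<notin> B"
  shows "card {f. f permutes insert a B \<and> Q f}
       = (\<Sum>b\<in>insert a B. card {p. p permutes B \<and> Q (transpose a b \<circ> p)})"
proof -
  define g :: "'a \<times> ('a \<Rightarrow> 'a) \<Rightarrow> 'a \<Rightarrow> 'a" where "g = (\<lambda>(b, p). transpose a b \<circ> p)"
  define S where "S = (SIGMA b:insert a B. {p. p permutes B \<and> Q (transpose a b \<circ> p)})"
  have "{f. f permutes insert a B \<and> Q f} = g ` S"
    using permutes_insert[of a B] unfolding g_def S_def by (auto simp: set_eq_iff image_iff)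
  moreover have "inj_on g S"
  proof (rule inj_onI, clarify)
    fix b p c q
    assume "(b, p) \<in> S" "(c, q) \<in> S" and eq: "g (b, p) = g (c, q)"
    then have "p a = a" "q a = a" using B(2) unfolding S_def by (auto intro: permutes_not_in)
    then have "b = c" using fun_cong[OF eq, of a] by (simp add: g_def)
    moreover have "p = transpose a b \<circ> g (b, p)" "q = transpose a c \<circ> g (c, q)"
      by (simp_all add: g_def fun_eq_iff)
    ultimately show "b = c \<and> p = q" using eq by simp
  qed
  moreover have "finite {p. p permutes B \<and> Q (transpose a b \<circ> p)}" for b
    using finite_permutations[OF B(1)] by (rule finite_subset[rotated]) auto
  ultimately show ?thesis
    using B(1) by (simp add: card_image S_def card_SigmaI)
qed

lemma card_permutes_insert_cyc_min:
  fixes n :: nat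
  assumes B: "B \<subseteq> {0..<n}"
    and Q_remove: "\<And>f. f permutes insert n B \<Longrightarrow> Q (transpose n (f n) \<circ> f) \<longleftrightarrow> Q f"
    and cyc_min_split: "\<And>f. f permutes insert n B \<Longrightarrow> Q f \<Longrightarrow>
      cyc_min f n = cyc_min (transpose n (f n) \<circ> f) (n - 1) \<union> (if f n = n then {n} else {})"
  shows "card {f. f permutes insert n B \<and> Q f \<and> cyc_min f n = M} =
    (if n \<in> M then card {p. p permutes B \<and> Q p \<and> cyc_min p (n - 1) = M - {n}}
     else card B * card {p. p permutes B \<and> Q p \<and> cyc_min p (n - 1) = M})"
proof -
  define P where "P M = {p. p permutes B \<and> Q p \<and> cyc_min p (n - 1) = M}" for M
  have fin: "finite B" "n \<notin> B" using B finite_subset by auto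
  have n_notin: "n \<notin> cyc_min p (n - 1)" for p
    using cyc_min_subset[of p "n - 1"] by (auto simp: subset_iff)
  have summand: "{p. p permutes B \<and> Q (transpose n b \<circ> p) \<and> cyc_min (transpose n b \<circ> p) n = M} =
      (if b = n then (if n \<in> M then P (M - {n}) else {}) else (if n \<in> M then {} else P M))"
    if b: "b \<in> insert n B" for b
  proof -
    have "transpose n b \<circ> p permutes insert n B" "(transpose n b \<circ> p) n = b"
      "transpose n ((transpose n b \<circ> p) n) \<circ> (transpose n b \<circ> p) = p" if "p permutes B" for p
      using permutes_compose[OF permutes_subset[OF that] permutes_swap_id[OF insertI1 b]]
        permutes_not_in[OF that fin(2)]
      by (auto simp: fun_eq_iff)
    then show ?thesis
      using Q_remove cyc_min_split n_notin unfolding P_def by (fastforce split: if_splits)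
  qed
  have "card {f. f permutes insert n B \<and> Q f \<and> cyc_min f n = M} =
      (\<Sum>b\<in>insert n B. card {p. p permutes B \<and> Q (transpose n b \<circ> p) \<and>
                                    cyc_min (transpose n b \<circ> p) n = M})"
    using card_permutes_insert_filter[OF fin, of "\<lambda>f. Q f \<and> cyc_min f n = M"] by simp
  also have "\<dots> = (\<Sum>b\<in>insert n B. card (if b = n then (if n \<in> M then P (M - {n}) else {})
                                          else (if n \<in> M then {} else P M)))"
    using summand by (intro sum.cong) simp_all
  also have "\<dots> = (if n \<in> M then card (P (M - {n})) else card B * card (P M))"
  proof -
    have "(\<Sum>b\<in>B. card (if b = n then X else Y)) = card B * card Y" for X Y :: "(nat \<Rightarrow> nat) set"
      using fin(2) by (subst sum.cong[OF refl, of _ _ "\<lambda>_. card Y"]) auto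
    then show ?thesis using fin by simp
  qed
  finally show ?thesis unfolding P_def .
qed

lemma card_permutes_cyc_min:
  assumes "M \<subseteq> {1..n}"
  shows "card {\<tau>. \<tau> permutes {1..n} \<and> cyc_min \<tau> n = M} = (\<Prod>j\<in>{1..n} - M. j - 1)"
  using assms
proof (induction n arbitrary: M)
  case 0
  moreover have "cyc_min \<tau> 0 = {}" for \<tau> using cyc_min_subset[of \<tau> 0] by simp
  ultimately show ?case by simp
next
  case (Suc n)
  have "{1..Suc n} = insert (Suc n) {1..n}" "{1..n} \<subseteq> {0..<Suc n}" by auto
  then have rec: "card {\<tau>. \<tau> permutes {1..Suc n} \<and> cyc_min \<tau> (Suc n) = M} =
      (if Suc n \<in> M then card {p. p permutes {1..n} \<and> cyc_min p n = M - {Suc n}}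
       else n * card {p. p permutes {1..n} \<and> cyc_min p n = M})"
    using card_permutes_insert_cyc_min[of "{1..n}" "Suc n" "\<lambda>_. True" M]
      cyc_min_remove[of _ "{1..Suc n}" "Suc n"]
    by simp
  show ?case
  proof (cases "Suc n \<in> M")
    case True
    then have "{1..n} - (M - {Suc n}) = {1..Suc n} - M" by (auto simp: le_Suc_eq)
    moreover have "M - {Suc n} \<subseteq> {1..n}" using Suc.prems by auto
    ultimately show ?thesis using rec Suc.IH[of "M - {Suc n}"] True by simp
  next
    case False
    then have "{1..Suc n} - M = insert (Suc n) ({1..n} - M)" by auto
    moreover have "M \<subseteq> {1..n}" using Suc.prems False by (force simp: le_Suc_eq)
    ultimately show ?thesis using rec Suc.IH[of M] False by simp
  qed
qed

lemma permutes_doubleton_eq_transpose: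
  assumes \<sigma>: "\<sigma> permutes {a, b}" and b: "b \<in> orbit \<sigma> a"
  shows "\<sigma> = transpose a b"
proof (cases "a = b")
  case True
  then show ?thesis using \<sigma> by (simp add: permutes_sing)
next
  case False
  have "orbit \<sigma> a \<noteq> {a}" using b False by (metis singletonD)
  then have "\<sigma> a \<noteq> a" by (simp add: orbit_eq_singleton_iff)
  moreover have "\<sigma> a \<in> {a, b}" using permutes_in_image[OF \<sigma>] by simp
  ultimately have \<sigma>a: "\<sigma> a = b" by simp
  then have "\<sigma> b \<noteq> b" using injD[OF permutes_inj[OF \<sigma>], of a b] False by metis
  moreover have "\<sigma> b \<in> {a, b}" using permutes_in_image[OF \<sigma>] by simp
  ultimately have \<sigma>b: "\<sigma> b = a" by simp
  show ?thesis
  proof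
    fix x
    show "\<sigma> x = transpose a b x"
      using \<sigma>a \<sigma>b permutes_not_in[OF \<sigma>, of x] by (cases "x = a \<or> x = b") auto
  qed
qed

lemma card_permutes_orbit_cyc_min:
  assumes "M \<subseteq> {1..n}" "1 \<in> M"
  shows "card {\<sigma>. \<sigma> permutes {0..n} \<and> 1 \<in> orbit \<sigma> 0 \<and> cyc_min \<sigma> n = M} = (\<Prod>j\<in>{1..n} - M. j)"
  using assms
proof (induction n arbitrary: M)
  case 0
  then show ?case by simp
next
  case (Suc n)
  show ?case
  proof (cases "n = 0")
    case True
    then have "M = {1}" using Suc.prems by auto
    have two: "{0..1::nat} = {0, 1}" by auto
    have "{\<sigma>. \<sigma> permutes {0..1} \<and> 1 \<in> orbit \<sigma> 0 \<and> cyc_min \<sigma> 1 = {1}} = {transpose 0 1}"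
    proof (intro set_eqI iffI)
      fix \<sigma> assume "\<sigma> \<in> {\<sigma>. \<sigma> permutes {0..1} \<and> 1 \<in> orbit \<sigma> 0 \<and> cyc_min \<sigma> 1 = {1}}"
      then show "\<sigma> \<in> {transpose 0 1}" using permutes_doubleton_eq_transpose[of \<sigma> 0 1] two by simp
    next
      fix \<sigma> :: "nat \<Rightarrow> nat" assume "\<sigma> \<in> {transpose 0 1}"
      moreover have perm: "transpose 0 1 permutes {0..1::nat}" by (auto intro: permutes_swap_id)
      moreover have "1 \<in> orbit (transpose 0 1) (0::nat)" by (rule orbit_eqI(1)) simp
      moreover have "cyc_min (transpose 0 1) 1 = {1}"
        using one_in_cyc_min[OF permutes_imp_permutation[OF _ perm]] cyc_min_subset[of _ 1] by auto
      ultimately show "\<sigma> \<in> {\<sigma>. \<sigma> permutes {0..1} \<and> 1 \<in> orbit \<sigma> 0 \<and> cyc_min \<sigma> 1 = {1}}" by simp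
    qed
    then show ?thesis using True \<open>M = {1}\<close> by simp
  next
    case False
    have ins: "{0..Suc n} = insert (Suc n) {0..n}" and B: "{0..n} \<subseteq> {0..<Suc n}" by auto
    have Q: "1 \<in> orbit (transpose (Suc n) (f (Suc n)) \<circ> f) 0 \<longleftrightarrow> 1 \<in> orbit f 0"
      if "f permutes insert (Suc n) {0..n}" for f
      using orbit_transpose_comp_remove[OF permutes_inj[OF that], of 0 "Suc n"] False by simp
    have cyc: "cyc_min f (Suc n) =
        cyc_min (transpose (Suc n) (f (Suc n)) \<circ> f) (Suc n - 1) \<union> (if f (Suc n) = Suc n then {Suc n} else {})"
      if "f permutes insert (Suc n) {0..n}" "1 \<in> orbit f 0" for f
      using cyc_min_remove[of f "{0..Suc n}" "Suc n"] that False ins by simp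
    have rec: "card {\<sigma>. \<sigma> permutes {0..Suc n} \<and> 1 \<in> orbit \<sigma> 0 \<and> cyc_min \<sigma> (Suc n) = M} =
      (if Suc n \<in> M then card {p. p permutes {0..n} \<and> 1 \<in> orbit p 0 \<and> cyc_min p n = M - {Suc n}}
       else Suc n * card {p. p permutes {0..n} \<and> 1 \<in> orbit p 0 \<and> cyc_min p n = M})"
      using card_permutes_insert_cyc_min[where Q = "\<lambda>\<sigma>. 1 \<in> orbit \<sigma> 0" and M = M, OF B Q cyc] ins
      by simp
    show ?thesis
    proof (cases "Suc n \<in> M")
      case True
      then have "{1..n} - (M - {Suc n}) = {1..Suc n} - M" by (auto simp: le_Suc_eq)
      moreover have "M - {Suc n} \<subseteq> {1..n}" "1 \<in> M - {Suc n}" using Suc.prems False by auto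
      ultimately show ?thesis using rec Suc.IH[of "M - {Suc n}"] True by simp
    next
      case False
      then have "{1..Suc n} - M = insert (Suc n) ({1..n} - M)" by auto
      moreover have "M \<subseteq> {1..n}" using Suc.prems False by (force simp: le_Suc_eq)
      ultimately show ?thesis using rec Suc.IH[of M] Suc.prems False by simp
    qed
  qed
qed

lemma card_permutes_pairs_cyc_min:
  assumes "M \<subseteq> {1..n}" "1 \<le> n"
  shows "card {\<sigma>. \<sigma> permutes {0..n} \<and> 1 \<in> orbit \<sigma> 0 \<and> cyc_min \<sigma> n = M}
       * card {\<tau>. \<tau> permutes {1..n} \<and> cyc_min \<tau> n = M} = (\<Prod>j\<in>{1..n} - M. j * (j - 1))"
proof (cases "1 \<in> M")
  case True
  then show ?thesis
    using card_permutes_orbit_cyc_min card_permutes_cyc_min assms(1) by (simp add: prod.distrib)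
next
  case False
  then have "1 \<in> {1..n} - M" using assms(2) by simp
  then have zero: "(\<Prod>j\<in>{1..n} - M. j - 1) = 0" "(\<Prod>j\<in>{1..n} - M. j * (j - 1)) = 0"
    by (auto intro!: prod_zero simp del: prod_zero_iff)
  show ?thesis unfolding card_permutes_cyc_min[OF assms(1)] zero by simp
qed

text \<open>\<open>compl_prod_sum w A k\<close> is the elementary symmetric function of degree \<open>card A - k\<close>
  in the weights \<open>w j\<close>, \<open>j \<in> A\<close>.\<close>
definition compl_prod_sum :: "('b \<Rightarrow> 'a::comm_semiring_1) \<Rightarrow> 'b set \<Rightarrow> nat \<Rightarrow> 'a" where
  "compl_prod_sum w A k = (\<Sum>M | M \<subseteq> A \<and> card M = k. \<Prod>j\<in>A - M. w j)"

lemma compl_prod_sum_0: "finite A \<Longrightarrow> compl_prod_sum w A 0 = prod w A"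
proof -
  assume "finite A"
  then have "{M. M \<subseteq> A \<and> card M = 0} = {{}}" by (auto dest: finite_subset)
  then show ?thesis unfolding compl_prod_sum_def by simp
qed

lemma compl_prod_sum_eq_0: "finite A \<Longrightarrow> card A < k \<Longrightarrow> compl_prod_sum w A k = 0"
proof -
  assume "finite A" "card A < k"
  then have "{M. M \<subseteq> A \<and> card M = k} = {}"
    using card_mono[of A] by (metis (mono_tags, lifting) Collect_empty_eq leD)
  then show ?thesis unfolding compl_prod_sum_def by (simp only: sum.empty)
qed

lemma compl_prod_sum_insert:
  assumes A: "finite A" "a \<notin> A"
  shows "compl_prod_sum w (insert a A) (Suc k) = compl_prod_sum w A k + w a * compl_prod_sum w A (Suc k)"
proof -
  define S where "S k = {M. M \<subseteq> A \<and> card M = k}" for k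
  have fin: "finite (S k)" for k unfolding S_def using A(1) by simp
  have subset_fin: "finite M" if "M \<subseteq> A" for M using finite_subset[OF that A(1)] .
  have split: "{M. M \<subseteq> insert a A \<and> card M = Suc k} = insert a ` S k \<union> S (Suc k)"
  proof (intro set_eqI iffI)
    fix M assume M: "M \<in> {M. M \<subseteq> insert a A \<and> card M = Suc k}"
    show "M \<in> insert a ` S k \<union> S (Suc k)"
    proof (cases "a \<in> M")
      case True
      have "M - {a} \<subseteq> A" using M by auto
      moreover have "card (M - {a}) = k" using M True subset_fin[OF \<open>M - {a} \<subseteq> A\<close>] by simp
      ultimately have "M - {a} \<in> S k" unfolding S_def by simp
      moreover have "M = insert a (M - {a})" using True by auto
      ultimately show ?thesis by blast
    next
      case False
      then show ?thesis using M unfolding S_def by auto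
    qed
  next
    fix M assume "M \<in> insert a ` S k \<union> S (Suc k)"
    then show "M \<in> {M. M \<subseteq> insert a A \<and> card M = Suc k}"
    proof
      assume "M \<in> insert a ` S k"
      then obtain N where "N \<subseteq> A" "card N = k" "M = insert a N" unfolding S_def by blast
      moreover have "a \<notin> N" using \<open>N \<subseteq> A\<close> A(2) by blast
      ultimately show ?thesis using subset_fin[of N] by auto
    qed (auto simp: S_def)
  qed
  have "compl_prod_sum w (insert a A) (Suc k)
      = (\<Sum>M\<in>insert a ` S k. \<Prod>j\<in>insert a A - M. w j) + (\<Sum>M\<in>S (Suc k). \<Prod>j\<in>insert a A - M. w j)"
    unfolding compl_prod_sum_def split using fin A(2)
    by (intro sum.union_disjoint) (auto simp: S_def)
  also have "(\<Sum>M\<in>insert a ` S k. \<Prod>j\<in>insert a A - M. w j) = compl_prod_sum w A k"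
  proof -
    have notin: "a \<notin> M" if "M \<in> S k" for M k using that A(2) unfolding S_def by blast
    have "inj_on (insert a) (S k)"
      by (rule inj_onI) (metis Diff_insert_absorb notin)
    moreover have "insert a A - insert a M = A - M" for M using A(2) by blast
    ultimately show ?thesis unfolding compl_prod_sum_def S_def[symmetric] by (simp add: sum.reindex)
  qed
  also have "(\<Sum>M\<in>S (Suc k). \<Prod>j\<in>insert a A - M. w j) = w a * compl_prod_sum w A (Suc k)"
  proof -
    have "(\<Prod>j\<in>insert a A - M. w j) = w a * (\<Prod>j\<in>A - M. w j)" if "M \<in> S (Suc k)" for M
    proof -
      have "insert a A - M = insert a (A - M)" using that A(2) unfolding S_def by blast
      then show ?thesis using A by simp
    qed
    then show ?thesis unfolding compl_prod_sum_def S_def[symmetric]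
      by (simp add: sum_distrib_left)
  qed
  finally show ?thesis .
qed

lemma js_one_eq_compl_prod_sum:
  "js 1 n k = (-1) ^ (n + k) * int (compl_prod_sum (\<lambda>j. j * (j - 1)) {1..n} k)"
proof (induction n arbitrary: k)
  case 0
  then show ?case by (cases k) (simp_all add: compl_prod_sum_0 compl_prod_sum_eq_0)
next
  case (Suc n)
  let ?w = "\<lambda>j::nat. j * (j - 1)"
  show ?case
  proof (cases k)
    case 0
    have "prod ?w {1..Suc n} = 0" by (rule prod_zero) auto
    then have "compl_prod_sum ?w {1..Suc n} 0 = 0" by (simp only: compl_prod_sum_0 finite_atLeastAtMost)
    then show ?thesis using 0 by simp
  next
    case (Suc k')
    show ?thesis
    proof (cases "k' \<le> n")
      case False
      then show ?thesis using Suc by (simp add: compl_prod_sum_eq_0)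
    next
      case True
      have "{1..Suc n} = insert (Suc n) {1..n}" by auto
      then have "compl_prod_sum ?w {1..Suc n} k
          = compl_prod_sum ?w {1..n} k' + Suc n * n * compl_prod_sum ?w {1..n} k"
        using compl_prod_sum_insert[of "{1..n}" "Suc n" ?w k'] Suc by simp
      then show ?thesis using Suc True Suc.IH[of k'] Suc.IH[of k]
        by (simp add: algebra_simps)
    qed
  qed
qed

theorem corollary15:
  fixes n k :: nat
  assumes "1 \<le> k" and "k \<le> n"
  shows "\<bar>ls n k\<bar> = int (card {(\<sigma>, \<tau>).
            \<sigma> permutes {0..n} \<and> num_cycles \<sigma> {0..n} = k \<and>
            \<tau> permutes {1..n} \<and> num_cycles \<tau> {1..n} = k \<and>
            1 \<in> Orb \<sigma> 0 \<and> cyc_min \<sigma> n = cyc_min \<tau> n})"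
    (is "_ = int (card ?pairs)")
proof -
  define S where "S M = {\<sigma>. \<sigma> permutes {0..n} \<and> 1 \<in> orbit \<sigma> 0 \<and> cyc_min \<sigma> n = M}" for M
  define T where "T M = {\<tau>. \<tau> permutes {1..n} \<and> cyc_min \<tau> n = M}" for M
  have n: "1 \<le> n" using assms by simp
  have "?pairs = (\<Union>M\<in>{M. M \<subseteq> {1..n} \<and> card M = k}. S M \<times> T M)"
    unfolding S_def T_def Orb_eq_orbit
    using num_cycles_permutes_orbit[OF _ _ n] num_cycles_permutes cyc_min_subset by auto
  moreover have "finite (S M)" "finite (T M)" for M
    unfolding S_def T_def by (auto intro: finite_subset[OF _ finite_permutations])
  ultimately have "card ?pairs = (\<Sum>M | M \<subseteq> {1..n} \<and> card M = k. card (S M) * card (T M))"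
    by (simp add: card_UN_disjoint card_cartesian_product S_def disjoint_iff)
  also have "\<dots> = compl_prod_sum (\<lambda>j. j * (j - 1)) {1..n} k"
    unfolding compl_prod_sum_def S_def T_def using card_permutes_pairs_cyc_min n by simp
  finally show ?thesis unfolding ls_def js_one_eq_compl_prod_sum by (simp add: abs_mult)
qed

end
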